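(* Let $G$ be a finite group. Then $U(G)\le K(G)$.
   Context: For $\chi\in\mathrm{Irr}(G)$, the center of $\chi$ is $Z(\chi)=\{g\in G : |\chi(g)|=\chi(1)\}$. For a nonabelian group $G$, let $\mathcal{X}=\{\chi\in\mathrm{Irr}(G) : Z(\chi)>Z(G)\}$ (strict containment) and define $K(G)=\bigcap_{\chi\in\mathcal{X}}\ker(\chi)$; if $G$ is abelian, set $K(G)=G$. For a normal subgroup $H$ of $G$, $\mathrm{Irr}(G\mid H)$ is the set of $\chi\in\mathrm{Irr}(G)$ with $H\not\le\ker(\chi)$, and $V(G\mid H)$ is the subgroup generated by all $g\in G$ with $\chi(g)\ne0$ for some $\chi\in\mathrm{Irr}(G\mid H)$ (with $V(G\mid 1)=1$). For a normal subgroup $N$, $U(G\mid N)$ is the product of all normal subgroups $H$ of $G$ with $V(G\mid H)\le N$, and $U(G)=U(G\mid Z(G))$. *)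

theory Defs
  imports "HOL-Algebra.Algebra" "Jordan_Normal_Form.Matrix"
begin

definition mat_trace :: "complex mat \<Rightarrow> complex" where
  "mat_trace A = (\<Sum>i<dim_row A. A $$ (i, i))"

definition is_rep :: "('g, 'b) monoid_scheme \<Rightarrow> nat \<Rightarrow> ('g \<Rightarrow> complex mat) \<Rightarrow> bool" where
  "is_rep G n \<rho> \<longleftrightarrow>
     (\<forall>g\<in>carrier G. \<rho> g \<in> carrier_mat n n) \<and>
     (\<forall>g\<in>carrier G. \<forall>h\<in>carrier G. \<rho> (g \<otimes>\<^bsub>G\<^esub> h) = \<rho> g * \<rho> h) \<and>
     \<rho> \<one>\<^bsub>G\<^esub> = 1\<^sub>m n"

definition invariant_subspace :: "('g, 'b) monoid_scheme \<Rightarrow> nat \<Rightarrow> ('g \<Rightarrow> complex mat) \<Rightarrow> complex vec set \<Rightarrow> bool" where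
  "invariant_subspace G n \<rho> W \<longleftrightarrow>
     W \<subseteq> carrier_vec n \<and> 0\<^sub>v n \<in> W \<and>
     (\<forall>v\<in>W. \<forall>w\<in>W. v + w \<in> W) \<and>
     (\<forall>c::complex. \<forall>w\<in>W. c \<cdot>\<^sub>v w \<in> W) \<and>
     (\<forall>g\<in>carrier G. \<forall>w\<in>W. \<rho> g *\<^sub>v w \<in> W)"

definition irr_rep :: "('g, 'b) monoid_scheme \<Rightarrow> nat \<Rightarrow> ('g \<Rightarrow> complex mat) \<Rightarrow> bool" where
  "irr_rep G n \<rho> \<longleftrightarrow> is_rep G n \<rho> \<and> n > 0 \<and>
     (\<forall>W. invariant_subspace G n \<rho> W \<longrightarrow> W = {0\<^sub>v n} \<or> W = carrier_vec n)"

definition Irr :: "('g, 'b) monoid_scheme \<Rightarrow> ('g \<Rightarrow> complex) set" where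
  "Irr G = {\<chi>. \<exists>n \<rho>. irr_rep G n \<rho> \<and>
              \<chi> = (\<lambda>g. if g \<in> carrier G then mat_trace (\<rho> g) else 0)}"

definition char_ker :: "('g, 'b) monoid_scheme \<Rightarrow> ('g \<Rightarrow> complex) \<Rightarrow> 'g set" where
  "char_ker G \<chi> = {g \<in> carrier G. \<chi> g = \<chi> \<one>\<^bsub>G\<^esub>}"

definition char_center :: "('g, 'b) monoid_scheme \<Rightarrow> ('g \<Rightarrow> complex) \<Rightarrow> 'g set" where
  "char_center G \<chi> = {g \<in> carrier G. cmod (\<chi> g) = cmod (\<chi> \<one>\<^bsub>G\<^esub>)}"

definition grp_center :: "('g, 'b) monoid_scheme \<Rightarrow> 'g set" where
  "grp_center G = {z \<in> carrier G. \<forall>g\<in>carrier G. z \<otimes>\<^bsub>G\<^esub> g = g \<otimes>\<^bsub>G\<^esub> z}"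

definition Kgrp :: "('g, 'b) monoid_scheme \<Rightarrow> 'g set" where
  "Kgrp G = (if comm_group G then carrier G
             else carrier G \<inter> (\<Inter>\<chi> \<in> {\<chi> \<in> Irr G. grp_center G \<subset> char_center G \<chi>}. char_ker G \<chi>))"

definition Irr_rel :: "('g, 'b) monoid_scheme \<Rightarrow> 'g set \<Rightarrow> ('g \<Rightarrow> complex) set" where
  "Irr_rel G H = {\<chi> \<in> Irr G. \<not> H \<subseteq> char_ker G \<chi>}"

definition Vgrp :: "('g, 'b) monoid_scheme \<Rightarrow> 'g set \<Rightarrow> 'g set" where
  "Vgrp G H = generate G {g \<in> carrier G. \<exists>\<chi> \<in> Irr_rel G H. \<chi> g \<noteq> 0}"

text \<open>Product of all normal subgroups H with V(G|H) \<le> N (= subgroup generated by their union).\<close>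
definition Ugrp_rel :: "('g, 'b) monoid_scheme \<Rightarrow> 'g set \<Rightarrow> 'g set" where
  "Ugrp_rel G N = generate G (\<Union>{H. H \<lhd> G \<and> Vgrp G H \<subseteq> N})"

definition Ugrp :: "('g, 'b) monoid_scheme \<Rightarrow> 'g set" where
  "Ugrp G = Ugrp_rel G (grp_center G)"

end

theory Submission
  imports Defs
begin

(* Let \<chi> be afforded by an irreducible representation \<rho> with Z(G) < Z(\<chi>), and let H be a
  normal subgroup with V(G|H) \<le> Z(G). As \<chi> does not vanish on Z(\<chi>), \<chi> \<in> Irr(G|H) would give
  Z(\<chi>) \<le> V(G|H) \<le> Z(G); hence H \<le> ker \<chi>. The vectors fixed by \<rho>(H) form a G-invariant
  subspace because H is normal, and it is nonzero because the columns of \<Sum>_{h\<in>H} \<rho>(h) are fixed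
  by \<rho>(H) while its trace is |H| \<chi>(1) \<noteq> 0. By irreducibility \<rho> is trivial on H, so every such H,
  and with it U(G), lies in the kernel of \<rho>, which is contained in ker \<chi>. *)

lemma is_rep_carrier: "is_rep G n \<rho> \<Longrightarrow> g \<in> carrier G \<Longrightarrow> \<rho> g \<in> carrier_mat n n"
  unfolding is_rep_def by blast

lemma is_rep_mult:
  "is_rep G n \<rho> \<Longrightarrow> g \<in> carrier G \<Longrightarrow> h \<in> carrier G \<Longrightarrow> \<rho> (g \<otimes>\<^bsub>G\<^esub> h) = \<rho> g * \<rho> h"
  unfolding is_rep_def by blast

lemma is_rep_one: "is_rep G n \<rho> \<Longrightarrow> \<rho> \<one>\<^bsub>G\<^esub> = 1\<^sub>m n"
  unfolding is_rep_def by blast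

lemma mat_trace_one_mat: "mat_trace (1\<^sub>m n) = of_nat n"
  unfolding mat_trace_def by simp

lemma eq_one_mat_if_fixes_all:
  assumes A: "A \<in> carrier_mat n n" and fixes_all: "\<And>v. v \<in> carrier_vec n \<Longrightarrow> A *\<^sub>v v = (v::complex vec)"
  shows "A = 1\<^sub>m n"
proof (rule eq_matI)
  fix i j assume i: "i < dim_row (1\<^sub>m n)" and j: "j < dim_col (1\<^sub>m n)"
  have "(A *\<^sub>v unit_vec n j) $ i = A $$ (i, j)"
    using A i j by (simp add: scalar_prod_def row_def unit_vec_def if_distrib[of "\<lambda>x. _ * x"]
        sum.delta' cong: if_cong)
  then show "A $$ (i, j) = 1\<^sub>m n $$ (i, j)"
    using fixes_all[of "unit_vec n j"] i j by simp
qed (use A in auto)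

definition fixed_space :: "nat \<Rightarrow> ('g \<Rightarrow> complex mat) \<Rightarrow> 'g set \<Rightarrow> complex vec set" where
  "fixed_space n \<rho> H = {v \<in> carrier_vec n. \<forall>h\<in>H. \<rho> h *\<^sub>v v = v}"

lemma invariant_subspace_fixed_space:
  assumes rep: "is_rep G n \<rho>" and normal: "H \<lhd> G"
  shows "invariant_subspace G n \<rho> (fixed_space n \<rho> H)"
proof -
  interpret normal H G by (rule normal)
  have carH: "\<rho> h \<in> carrier_mat n n" if "h \<in> H" for h
    using is_rep_carrier[OF rep] subset that by blast
  have conj: "\<rho> h *\<^sub>v (\<rho> g *\<^sub>v w) = \<rho> g *\<^sub>v w"
    if g: "g \<in> carrier G" and h: "h \<in> H" and w: "w \<in> fixed_space n \<rho> H" for g h w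
  proof -
    define k where "k = inv\<^bsub>G\<^esub> g \<otimes>\<^bsub>G\<^esub> h \<otimes>\<^bsub>G\<^esub> g"
    have k: "k \<in> H" unfolding k_def using inv_op_closed1[OF g h] .
    have "h \<otimes>\<^bsub>G\<^esub> g = g \<otimes>\<^bsub>G\<^esub> k"
      unfolding k_def using g h subset by (auto simp: m_assoc[symmetric])
    then have "\<rho> h * \<rho> g = \<rho> g * \<rho> k"
      using is_rep_mult[OF rep] g h k subset by (metis subsetD)
    moreover have "\<rho> k *\<^sub>v w = w" "w \<in> carrier_vec n"
      using w k unfolding fixed_space_def by auto
    ultimately show ?thesis
      using is_rep_carrier[OF rep g] carH[OF h] carH[OF k] by (metis assoc_mult_mat_vec)
  qed
  show ?thesis
    unfolding invariant_subspace_def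
  proof (intro conjI ballI allI)
    show "0\<^sub>v n \<in> fixed_space n \<rho> H"
      unfolding fixed_space_def using carH by (fastforce intro!: eq_vecI simp: scalar_prod_def)
    fix v w assume "v \<in> fixed_space n \<rho> H" "w \<in> fixed_space n \<rho> H"
    then show "v + w \<in> fixed_space n \<rho> H"
      unfolding fixed_space_def by (auto simp: mult_add_distrib_mat_vec[OF carH])
  next
    fix c :: complex and w assume "w \<in> fixed_space n \<rho> H"
    then show "c \<cdot>\<^sub>v w \<in> fixed_space n \<rho> H"
      unfolding fixed_space_def by (auto simp: mult_mat_vec[OF carH])
  next
    fix g w assume g: "g \<in> carrier G" and w: "w \<in> fixed_space n \<rho> H"
    then show "\<rho> g *\<^sub>v w \<in> fixed_space n \<rho> H"
      using conj mult_mat_vec_carrier[OF is_rep_carrier[OF rep g]] unfolding fixed_space_def by auto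
  qed (auto simp: fixed_space_def)
qed

lemma column_sum_in_fixed_space:
  assumes "group G" and rep: "is_rep G n \<rho>" and sub: "subgroup H G" and j: "j < n"
  shows "vec n (\<lambda>i. \<Sum>h\<in>H. \<rho> h $$ (i, j)) \<in> fixed_space n \<rho> H"
    (is "?v \<in> _")
  unfolding fixed_space_def
proof (intro CollectI conjI ballI)
  interpret group G by fact
  have carH: "\<rho> h \<in> carrier_mat n n" if "h \<in> H" for h
    using is_rep_carrier[OF rep] subgroup.mem_carrier[OF sub that] .
  fix h' assume h': "h' \<in> H"
  have h'_carrier: "h' \<in> carrier G" using subgroup.mem_carrier[OF sub h'] .
  have left_mult_H: "(\<lambda>h. h' \<otimes>\<^bsub>G\<^esub> h) ` H = H"
    using coset_join3[OF h'_carrier sub h'] by (auto simp: l_coset_def)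
  show "\<rho> h' *\<^sub>v ?v = ?v"
  proof (rule eq_vecI)
    fix i assume "i < dim_vec ?v"
    then have i: "i < n" by simp
    have "(\<rho> h' *\<^sub>v ?v) $ i = (\<Sum>k<n. \<rho> h' $$ (i, k) * (\<Sum>h\<in>H. \<rho> h $$ (k, j)))"
      using carH[OF h'] i by (simp add: scalar_prod_def row_def lessThan_atLeast0)
    also have "\<dots> = (\<Sum>h\<in>H. \<Sum>k<n. \<rho> h' $$ (i, k) * \<rho> h $$ (k, j))"
      unfolding sum_distrib_left by (rule sum.swap)
    also have "\<dots> = (\<Sum>h\<in>H. (\<rho> h' * \<rho> h) $$ (i, j))"
    proof (rule sum.cong[OF refl])
      fix h assume "h \<in> H"
      then show "(\<Sum>k<n. \<rho> h' $$ (i, k) * \<rho> h $$ (k, j)) = (\<rho> h' * \<rho> h) $$ (i, j)"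
        using carH[of h] carH[OF h'] i j by (simp add: scalar_prod_def row_def col_def lessThan_atLeast0)
    qed
    also have "\<dots> = (\<Sum>h\<in>H. \<rho> (h' \<otimes>\<^bsub>G\<^esub> h) $$ (i, j))"
      using is_rep_mult[OF rep h'_carrier] subgroup.mem_carrier[OF sub] by (intro sum.cong) auto
    also have "\<dots> = (\<Sum>h\<in>(\<lambda>h. h' \<otimes>\<^bsub>G\<^esub> h) ` H. \<rho> h $$ (i, j))"
      using inj_on_subset[OF inj_on_cmult[OF h'_carrier] subgroup.subset[OF sub]]
      by (simp add: sum.reindex)
    finally show "(\<rho> h' *\<^sub>v ?v) $ i = ?v $ i"
      unfolding left_mult_H using i by simp
  qed (use carH[OF h'] in simp)
qed simp

lemma fixed_space_nontrivial:
  assumes "group G" and rep: "is_rep G n \<rho>" and sub: "subgroup H G"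
    and char_sum: "(\<Sum>h\<in>H. mat_trace (\<rho> h)) \<noteq> 0"
  shows "fixed_space n \<rho> H \<noteq> {0\<^sub>v n}"
proof -
  define v where "v j = vec n (\<lambda>i. \<Sum>h\<in>H. \<rho> h $$ (i, j))" for j
  have "(\<Sum>j<n. v j $ j) = (\<Sum>j<n. \<Sum>h\<in>H. \<rho> h $$ (j, j))"
    unfolding v_def by (intro sum.cong) auto
  also have "\<dots> = (\<Sum>h\<in>H. \<Sum>j<n. \<rho> h $$ (j, j))"
    by (rule sum.swap)
  also have "\<dots> = (\<Sum>h\<in>H. mat_trace (\<rho> h))"
    unfolding mat_trace_def using is_rep_carrier[OF rep] subgroup.mem_carrier[OF sub]
    by (intro sum.cong) auto
  finally have "(\<Sum>j<n. v j $ j) \<noteq> 0"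
    using char_sum by simp
  then obtain j where j: "j < n" and "v j $ j \<noteq> 0"
    by (meson lessThan_iff sum.neutral)
  then have "v j \<noteq> 0\<^sub>v n" by auto
  moreover have "v j \<in> fixed_space n \<rho> H"
    unfolding v_def using column_sum_in_fixed_space[OF assms(1) rep sub j] .
  ultimately show ?thesis by blast
qed

definition rep_kernel :: "('g, 'b) monoid_scheme \<Rightarrow> nat \<Rightarrow> ('g \<Rightarrow> complex mat) \<Rightarrow> 'g set" where
  "rep_kernel G n \<rho> = {g \<in> carrier G. \<rho> g = 1\<^sub>m n}"

lemma subgroup_rep_kernel:
  assumes "group G" and rep: "is_rep G n \<rho>"
  shows "subgroup (rep_kernel G n \<rho>) G"
proof
  interpret group G by fact
  show "rep_kernel G n \<rho> \<subseteq> carrier G" unfolding rep_kernel_def by blast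
  show "\<one>\<^bsub>G\<^esub> \<in> rep_kernel G n \<rho>" unfolding rep_kernel_def using is_rep_one[OF rep] by simp
  fix x y assume x: "x \<in> rep_kernel G n \<rho>" and y: "y \<in> rep_kernel G n \<rho>"
  then show "x \<otimes>\<^bsub>G\<^esub> y \<in> rep_kernel G n \<rho>"
    unfolding rep_kernel_def using is_rep_mult[OF rep] by auto
  have x_carrier: "x \<in> carrier G" and "\<rho> x = 1\<^sub>m n" using x unfolding rep_kernel_def by auto
  then have "\<rho> (inv\<^bsub>G\<^esub> x) = \<rho> (inv\<^bsub>G\<^esub> x) * \<rho> x"
    using is_rep_carrier[OF rep, of "inv\<^bsub>G\<^esub> x"] by simp
  also have "\<dots> = 1\<^sub>m n"
    using is_rep_mult[OF rep, of "inv\<^bsub>G\<^esub> x" x] is_rep_one[OF rep] x_carrier by simp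
  finally show "inv\<^bsub>G\<^esub> x \<in> rep_kernel G n \<rho>"
    unfolding rep_kernel_def using x_carrier by simp
qed

definition rep_char :: "('g, 'b) monoid_scheme \<Rightarrow> ('g \<Rightarrow> complex mat) \<Rightarrow> 'g \<Rightarrow> complex" where
  "rep_char G \<rho> g = (if g \<in> carrier G then mat_trace (\<rho> g) else 0)"

lemma IrrE:
  assumes "\<chi> \<in> Irr G"
  obtains n \<rho> where "irr_rep G n \<rho>" and "\<chi> = rep_char G \<rho>"
  using assms unfolding Irr_def rep_char_def[abs_def] by blast

lemma rep_char_one: "monoid G \<Longrightarrow> is_rep G n \<rho> \<Longrightarrow> rep_char G \<rho> \<one>\<^bsub>G\<^esub> = of_nat n"
  by (simp add: rep_char_def is_rep_one mat_trace_one_mat monoid.one_closed)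

lemma rep_kernel_subset_char_ker:
  assumes "monoid G" and rep: "is_rep G n \<rho>"
  shows "rep_kernel G n \<rho> \<subseteq> char_ker G (rep_char G \<rho>)"
proof
  fix g assume "g \<in> rep_kernel G n \<rho>"
  then have "g \<in> carrier G" and "rep_char G \<rho> g = of_nat n"
    unfolding rep_kernel_def by (auto simp: rep_char_def mat_trace_one_mat)
  then show "g \<in> char_ker G (rep_char G \<rho>)"
    unfolding char_ker_def using rep_char_one[OF assms] by simp
qed

lemma normal_subset_rep_kernel:
  assumes irr: "irr_rep G n \<rho>" and normal: "H \<lhd> G" and "finite H"
    and H_char_ker: "H \<subseteq> char_ker G (rep_char G \<rho>)"
  shows "H \<subseteq> rep_kernel G n \<rho>"
proof -
  interpret normal H G by (rule normal)
  have rep: "is_rep G n \<rho>" and "n > 0" using irr unfolding irr_rep_def by auto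
  have sub: "subgroup H G" using normal by (rule normal_imp_subgroup)
  have "mat_trace (\<rho> h) = of_nat n" if h: "h \<in> H" for h
  proof -
    have "h \<in> carrier G" and "rep_char G \<rho> h = rep_char G \<rho> \<one>\<^bsub>G\<^esub>"
      using h H_char_ker unfolding char_ker_def by auto
    then show ?thesis using rep_char_one[OF monoid_axioms rep] by (simp add: rep_char_def)
  qed
  then have "(\<Sum>h\<in>H. mat_trace (\<rho> h)) = of_nat (card H * n)" by simp
  moreover have "card H > 0"
    using \<open>finite H\<close> subgroup.one_closed[OF sub] card_gt_0_iff by blast
  ultimately have "fixed_space n \<rho> H \<noteq> {0\<^sub>v n}"
    using fixed_space_nontrivial[OF is_group rep sub] \<open>n > 0\<close> by simp
  then have fixed_all: "fixed_space n \<rho> H = carrier_vec n"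
    using irr invariant_subspace_fixed_space[OF rep normal] unfolding irr_rep_def by blast
  show ?thesis
  proof
    fix h assume h: "h \<in> H"
    then have h_carrier: "h \<in> carrier G" using subset by blast
    have "\<rho> h *\<^sub>v v = v" if "v \<in> carrier_vec n" for v
    proof -
      have "v \<in> fixed_space n \<rho> H" using that fixed_all by simp
      then show ?thesis using h unfolding fixed_space_def by blast
    qed
    then have "\<rho> h = 1\<^sub>m n"
      by (rule eq_one_mat_if_fixes_all[OF is_rep_carrier[OF rep h_carrier]])
    then show "h \<in> rep_kernel G n \<rho>" unfolding rep_kernel_def using h_carrier by blast
  qed
qed

lemma char_center_subset_Vgrp:
  assumes "\<chi> \<in> Irr_rel G H" and "\<chi> \<one>\<^bsub>G\<^esub> \<noteq> 0"
  shows "char_center G \<chi> \<subseteq> Vgrp G H"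
proof
  fix g assume "g \<in> char_center G \<chi>"
  then have "g \<in> carrier G" and "\<chi> g \<noteq> 0"
    using assms(2) unfolding char_center_def by auto
  then show "g \<in> Vgrp G H"
    unfolding Vgrp_def using assms(1) by (blast intro: generate.incl)
qed

lemma Ugrp_rel_subset_char_ker:
  assumes grp: "group G" and fin: "finite (carrier G)" and \<chi>: "\<chi> \<in> Irr G"
    and not_central: "\<not> char_center G \<chi> \<subseteq> N"
  shows "Ugrp_rel G N \<subseteq> char_ker G \<chi>"
proof -
  interpret group G by (rule grp)
  obtain n \<rho> where irr: "irr_rep G n \<rho>" and \<chi>_def: "\<chi> = rep_char G \<rho>"
    using \<chi> by (rule IrrE)
  have rep: "is_rep G n \<rho>" and "n > 0" using irr unfolding irr_rep_def by auto
  then have \<chi>_one: "\<chi> \<one>\<^bsub>G\<^esub> \<noteq> 0" using rep_char_one[OF monoid_axioms rep] \<chi>_def by simp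
  have family_in_kernel: "H \<subseteq> rep_kernel G n \<rho>"
    if normal: "H \<lhd> G" and V: "Vgrp G H \<subseteq> N" for H
  proof (rule normal_subset_rep_kernel[OF irr normal])
    show "finite H"
      using finite_subset[OF subgroup.subset[OF normal_imp_subgroup[OF normal]] fin] .
    show "H \<subseteq> char_ker G (rep_char G \<rho>)"
    proof (rule ccontr)
      assume "\<not> H \<subseteq> char_ker G (rep_char G \<rho>)"
      then have "\<chi> \<in> Irr_rel G H" using \<chi> \<chi>_def unfolding Irr_rel_def by blast
      then show False
        using char_center_subset_Vgrp[of \<chi> G H] \<chi>_one V not_central by blast
    qed
  qed
  have "\<Union>{H. H \<lhd> G \<and> Vgrp G H \<subseteq> N} \<subseteq> rep_kernel G n \<rho>"
  proof (rule Union_least)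
    fix H assume "H \<in> {H. H \<lhd> G \<and> Vgrp G H \<subseteq> N}"
    then show "H \<subseteq> rep_kernel G n \<rho>" using family_in_kernel by blast
  qed
  then have "Ugrp_rel G N \<subseteq> rep_kernel G n \<rho>"
    unfolding Ugrp_rel_def by (rule generate_subgroup_incl[OF _ subgroup_rep_kernel[OF grp rep]])
  also have "\<dots> \<subseteq> char_ker G \<chi>"
    using rep_kernel_subset_char_ker[OF monoid_axioms rep] \<chi>_def by simp
  finally show ?thesis .
qed

theorem lemma6p5:
  fixes G :: "('g, 'b) monoid_scheme"
  assumes "group G" and "finite (carrier G)"
  shows "Ugrp G \<subseteq> Kgrp G"
proof -
  have "\<Union>{H. H \<lhd> G \<and> Vgrp G H \<subseteq> grp_center G} \<subseteq> carrier G"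
    using normal_imp_subgroup subgroup.subset by blast
  then have "Ugrp G \<subseteq> carrier G"
    unfolding Ugrp_def Ugrp_rel_def by (rule group.generate_incl[OF assms(1)])
  moreover have "Ugrp G \<subseteq> char_ker G \<chi>"
    if "\<chi> \<in> Irr G" and "grp_center G \<subset> char_center G \<chi>" for \<chi>
    unfolding Ugrp_def using Ugrp_rel_subset_char_ker[OF assms that(1)] that(2) by blast
  ultimately show ?thesis unfolding Kgrp_def by auto
qed

end
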